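(* Let $a,b,c$ be real numbers such that either $a,b,c\ge0$ and $0<a+b\le c$, or $a,b\ge 0$, $c\le 0$ and $a+b+c>0$. Then for every real $r\neq 0$, $$\frac{(e^{2ar}-1)(e^{2br}-1)(e^{cr}+1)^2}{(e^{(a+b+c)r}-1)^2}\ \ge\ \frac{16ab}{(a+b+c)^2}.$$ *)

theory Defs
  imports Complex_Main
begin

end

theory Submission
  imports Defs
begin

(* Writing u = ar/2, v = br/2, w = cr/2 and t = u + v + w, the identities
   exp(2x) - 1 = 2 e^x sinh x and exp(2x) + 1 = 2 e^x cosh x turn the left-hand side into
   4 sinh(2u) sinh(2v) cosh(w)^2 / sinh(t)^2, while the right-hand side is 16uv / t^2.
   This expression is even in (u,v,w), so we may take r > 0, where u, v >= 0, t > 0 and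
   either u + v <= w or w <= 0.  The inequality then follows from two estimates, both
   consequences of the monotonicity of sinh x / x on [0, oo):
     (A) 4uv sinh(u+v)^2 <= (u+v)^2 sinh(2u) sinh(2v)          for u, v >= 0;
     (B) m sinh(m+w) <= (m+w) sinh m cosh w                    for m = u + v,
   where (B) uses the side condition u + v <= w or w <= 0.  Squaring (B) and combining it
   with (A) gives the r-free core inequality, from which the theorem is read off. *)

text \<open>The function \<open>x * cosh x - sinh x\<close> is nondecreasing with value 0 at 0, because
  its derivative is \<open>x * sinh x \<ge> 0\<close>.  This is the derivative sign of \<open>sinh x / x\<close>.\<close>

lemma sinh_le_mult_cosh:
  fixes x :: real
  assumes "0 \<le> x"
  shows "sinh x \<le> x * cosh x"
proof -
  have "(\<lambda>y. y * cosh y - sinh y) 0 \<le> (\<lambda>y. y * cosh y - sinh y) x"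
  proof (rule deriv_nonneg_imp_mono[where g = "\<lambda>y. y * cosh y - sinh y" and g' = "\<lambda>y. y * sinh y"])
    fix y :: real
    assume "y \<in> {0..x}"
    then show "0 \<le> y * sinh y" by auto
    show "((\<lambda>y. y * cosh y - sinh y) has_real_derivative y * sinh y) (at y)"
      by (auto intro!: derivative_eq_intros)
  qed (use assms in auto)
  then show ?thesis by simp
qed

lemma sinh_over_id_mono:
  fixes h m :: real
  assumes "0 \<le> h" and "h \<le> m"
  shows "m * sinh h \<le> h * sinh m"
proof (cases "h = 0")
  case True
  then show ?thesis by simp
next
  case False
  with assms have h_pos: "0 < h" by auto
  have "(\<lambda>y. sinh y / y) h \<le> (\<lambda>y. sinh y / y) m"
  proof (rule deriv_nonneg_imp_mono[where g = "\<lambda>y. sinh y / y"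
                                      and g' = "\<lambda>y. (y * cosh y - sinh y) / y^2"])
    fix y :: real
    assume y: "y \<in> {h..m}"
    then have "y \<noteq> 0" using h_pos by auto
    then show "((\<lambda>y. sinh y / y) has_real_derivative (y * cosh y - sinh y) / y^2) (at y)"
      by (auto intro!: derivative_eq_intros simp: power2_eq_square field_simps)
    show "0 \<le> (y * cosh y - sinh y) / y^2"
      using y h_pos sinh_le_mult_cosh[of y] by auto
  qed (use assms in auto)
  then show ?thesis using h_pos assms by (simp add: field_simps)
qed

text \<open>Estimate (A): with \<open>m = u + v\<close>, \<open>h = u - v\<close> one has
  \<open>sinh(2u) sinh(2v) = sinh(m)^2 - sinh(h)^2\<close> and \<open>m^2 - h^2 = 4uv\<close>, so the claim reduces
  to \<open>m^2 sinh(h)^2 \<le> h^2 sinh(m)^2\<close>, i.e. the monotonicity of \<open>sinh x / x\<close> at \<open>|h| \<le> m\<close>.\<close>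

lemma sinh_double_product_bound:
  fixes u v :: real
  assumes "0 \<le> u" and "0 \<le> v"
  shows "4 * u * v * sinh (u + v)^2 \<le> (u + v)^2 * sinh (2 * u) * sinh (2 * v)"
proof -
  define m where "m = u + v"
  define h where "h = u - v"
  have "m + h = 2 * u" and "m - h = 2 * v" by (simp_all add: m_def h_def)
  then have "sinh (2 * u) * sinh (2 * v) = sinh (m + h) * sinh (m - h)" by simp
  also have "\<dots> = sinh m ^ 2 - sinh h ^ 2"
    by (simp add: sinh_add sinh_diff algebra_simps power2_eq_square[symmetric] cosh_square_eq)
  finally have product: "sinh (2 * u) * sinh (2 * v) = sinh m ^ 2 - sinh h ^ 2" .
  have h_le_m: "\<bar>h\<bar> \<le> m" using assms by (simp add: m_def h_def)
  have mono: "m * sinh \<bar>h\<bar> \<le> \<bar>h\<bar> * sinh m"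
    using sinh_over_id_mono[OF _ h_le_m] by simp
  have "(m * sinh \<bar>h\<bar>)^2 \<le> (\<bar>h\<bar> * sinh m)^2"
    using power_mono[OF mono] h_le_m by simp
  then have squared: "m^2 * sinh h ^ 2 \<le> h^2 * sinh m ^ 2"
    by (simp add: power_mult_distrib power2_abs)
  have "m^2 - h^2 = 4 * u * v" by (simp add: m_def h_def power2_eq_square algebra_simps)
  with squared have "4 * u * v * sinh m ^ 2 \<le> m^2 * (sinh m ^ 2 - sinh h ^ 2)"
    by (simp add: algebra_simps)
  then show ?thesis unfolding product[symmetric] by (simp add: m_def mult.assoc)
qed

text \<open>For \<open>0 \<le> m \<le> w\<close> it is the monotonicity of \<open>sinh x / x\<close> between
  \<open>w - m\<close> and \<open>w + m\<close> after expanding by the addition theorems; for \<open>w \<le> 0 \<le> m + w\<close> it is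
  the monotonicity between \<open>m + w\<close> and \<open>m\<close>, together with \<open>cosh w \<ge> 1\<close>.  Some side
  condition is needed: for \<open>m = 1\<close>, \<open>w = 1/2\<close> the inequality fails.\<close>

lemma sinh_shift_bound:
  fixes m w :: real
  assumes "0 \<le> m" and "0 \<le> m + w" and "m \<le> w \<or> w \<le> 0"
  shows "m * sinh (m + w) \<le> (m + w) * sinh m * cosh w"
  using assms(3)
proof
  assume "m \<le> w"
  then have "(w + m) * sinh (w - m) \<le> (w - m) * sinh (w + m)"
    using sinh_over_id_mono[of "w - m" "w + m"] assms(1) by simp
  then show ?thesis by (simp add: sinh_add sinh_diff algebra_simps)
next
  assume "w \<le> 0"
  have "m * sinh (m + w) \<le> (m + w) * sinh m"
    using sinh_over_id_mono[of "m + w" m] assms(2) \<open>w \<le> 0\<close> by simp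
  also have "\<dots> \<le> (m + w) * sinh m * cosh w"
    using assms(1,2) cosh_real_ge_1[of w] mult_left_mono[of 1 "cosh w" "(m + w) * sinh m"]
    by simp
  finally show ?thesis .
qed

text \<open>The hyperbolic form of the quotient in the theorem, at the rescaled parameters
  \<open>u = ar/2\<close>, \<open>v = br/2\<close>, \<open>w = cr/2\<close>.\<close>

definition hyp_quotient :: "real \<Rightarrow> real \<Rightarrow> real \<Rightarrow> real" where
  "hyp_quotient u v w = 4 * sinh (2 * u) * sinh (2 * v) * cosh w ^ 2 / sinh (u + v + w)^2"

text \<open>Both \<open>sinh(2u) sinh(2v)\<close> and \<open>sinh(u+v+w)^2\<close> are even, so the sign of \<open>r\<close>
  does not matter.\<close>

lemma hyp_quotient_even: "hyp_quotient (- u) (- v) (- w) = hyp_quotient u v w"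
  using sinh_minus[of "u + v + w"] by (simp add: hyp_quotient_def)

text \<open>The core inequality, free of the parameter \<open>r\<close>: square (B), multiply by \<open>4uv\<close>
  and use (A); the factor \<open>(u+v)^2\<close> is then cancelled (the case \<open>u = v = 0\<close> is trivial).\<close>

lemma sinh_cosh_core_inequality:
  fixes u v w :: real
  assumes "0 \<le> u" and "0 \<le> v" and "0 < u + v + w" and "u + v \<le> w \<or> w \<le> 0"
  shows "16 * u * v / (u + v + w)^2 \<le> hyp_quotient u v w"
proof -
  define m where "m = u + v"
  define t where "t = u + v + w"
  define P where "P = sinh (2 * u) * sinh (2 * v)"
  have m_nonneg: "0 \<le> m" and t_pos: "0 < t" using assms by (simp_all add: m_def t_def)
  have A: "4 * u * v * sinh m ^ 2 \<le> m^2 * P"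
    using sinh_double_product_bound[OF assms(1,2)] by (simp add: m_def P_def)
  have B: "m * sinh t \<le> t * sinh m * cosh w"
    using sinh_shift_bound[of m w] assms by (simp add: m_def t_def)
  have "(m * sinh t)^2 \<le> (t * sinh m * cosh w)^2"
    using power_mono[OF B] m_nonneg t_pos by simp
  then have "4 * u * v * (m^2 * sinh t ^ 2) \<le> 4 * u * v * (t^2 * sinh m ^ 2 * cosh w ^ 2)"
    using assms(1,2) by (intro mult_left_mono) (simp_all add: power_mult_distrib)
  also have "\<dots> = t^2 * cosh w ^ 2 * (4 * u * v * sinh m ^ 2)" by (simp add: algebra_simps)
  also have "\<dots> \<le> t^2 * cosh w ^ 2 * (m^2 * P)" using A by (intro mult_left_mono) auto
  finally have scaled: "m^2 * (4 * u * v * sinh t ^ 2) \<le> m^2 * (t^2 * cosh w ^ 2 * P)"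
    by (simp add: algebra_simps)
  have "4 * u * v * sinh t ^ 2 \<le> t^2 * cosh w ^ 2 * P"
  proof (cases "m = 0")
    case True
    then have "u = 0" using assms(1,2) by (simp add: m_def)
    then show ?thesis by (simp add: P_def)
  next
    case False
    then show ?thesis using scaled m_nonneg by (simp add: mult_le_cancel_left)
  qed
  moreover have "0 < sinh t" using t_pos by simp
  ultimately show ?thesis
    unfolding hyp_quotient_def t_def[symmetric] using t_pos
    by (simp add: P_def divide_simps algebra_simps)
qed

text \<open>The exponential quotient of the theorem, written in hyperbolic functions.  The
  exponential prefactors cancel since \<open>e^{2u} e^{2v} (e^w)^2 = (e^{u+v+w})^2\<close>.\<close>

lemma exp_quotient_eq_sinh_cosh:
  fixes u v w :: real
  shows "(exp (4 * u) - 1) * (exp (4 * v) - 1) * (exp (2 * w) + 1)^2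
           / (exp (2 * (u + v + w)) - 1)^2
         = hyp_quotient u v w"
proof -
  have minus_one: "exp (2 * x) - 1 = 2 * exp x * sinh x" for x :: real
    by (simp add: sinh_field_def exp_minus field_simps exp_add[symmetric])
  have plus_one: "exp (2 * x) + 1 = 2 * exp x * cosh x" for x :: real
    by (simp add: cosh_field_def exp_minus field_simps exp_add[symmetric])
  define E where "E = exp (2 * u) * exp (2 * v) * exp w ^ 2"
  have E_eq: "exp (u + v + w) ^ 2 = E"
    by (simp add: E_def power2_eq_square exp_add[symmetric] algebra_simps)
  have "E \<noteq> 0" by (simp add: E_def)
  moreover have "(exp (4 * u) - 1) * (exp (4 * v) - 1) * (exp (2 * w) + 1)^2
      = 4 * E * (4 * sinh (2 * u) * sinh (2 * v) * cosh w ^ 2)"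
    using minus_one[of "2 * u"] minus_one[of "2 * v"] plus_one[of w]
    by (simp add: E_def power_mult_distrib algebra_simps)
  moreover have "(exp (2 * (u + v + w)) - 1)^2 = 4 * E * sinh (u + v + w)^2"
    using minus_one[of "u + v + w"] by (simp add: power_mult_distrib E_eq)
  ultimately show ?thesis by (simp add: hyp_quotient_def)
qed

lemma exp_quotient_eq_hyp_quotient_abs:
  fixes a b c r :: real
  shows "(exp (2*a*r) - 1) * (exp (2*b*r) - 1) * (exp (c*r) + 1)^2 / (exp ((a+b+c)*r) - 1)^2
         = hyp_quotient (a * (\<bar>r\<bar> / 2)) (b * (\<bar>r\<bar> / 2)) (c * (\<bar>r\<bar> / 2))"
proof -
  have "(exp (2*a*r) - 1) * (exp (2*b*r) - 1) * (exp (c*r) + 1)^2 / (exp ((a+b+c)*r) - 1)^2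
        = hyp_quotient (a*r/2) (b*r/2) (c*r/2)"
    using exp_quotient_eq_sinh_cosh[of "a*r/2" "b*r/2" "c*r/2"] by (simp add: algebra_simps)
  also have "\<dots> = hyp_quotient (a * (\<bar>r\<bar> / 2)) (b * (\<bar>r\<bar> / 2)) (c * (\<bar>r\<bar> / 2))"
  proof (cases "r \<ge> 0")
    case False
    then have "a*r/2 = - (a * (\<bar>r\<bar> / 2))" and "b*r/2 = - (b * (\<bar>r\<bar> / 2))"
      and "c*r/2 = - (c * (\<bar>r\<bar> / 2))"
      by simp_all
    then show ?thesis by (simp only: hyp_quotient_even)
  qed simp
  finally show ?thesis .
qed

text \<open>The theorem: rescale by \<open>\<rho> = |r|/2\<close>, which turns the right-hand side into
  \<open>16uv/(u+v+w)^2\<close> and the left-hand side into the hyperbolic quotient, and apply the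
  core inequality, whose hypotheses are the given ones multiplied by \<open>\<rho> > 0\<close>.\<close>

theorem lemma4p1:
  fixes a b c r :: real
  assumes hyp: "(a \<ge> 0 \<and> b \<ge> 0 \<and> c \<ge> 0 \<and> 0 < a + b \<and> a + b \<le> c)
             \<or> (a \<ge> 0 \<and> b \<ge> 0 \<and> c \<le> 0 \<and> a + b + c > 0)"
    and r: "r \<noteq> 0"
  shows "(exp (2*a*r) - 1) * (exp (2*b*r) - 1) * (exp (c*r) + 1)^2 / (exp ((a+b+c)*r) - 1)^2
           \<ge> 16*a*b / (a+b+c)^2"
proof -
  define \<rho> where "\<rho> = \<bar>r\<bar> / 2"
  have \<rho>_pos: "0 < \<rho>" using r by (simp add: \<rho>_def)
  have "16 * (a*\<rho>) * (b*\<rho>) / (a*\<rho> + b*\<rho> + c*\<rho>)^2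
        = (16*a*b * \<rho>^2) / ((a+b+c)^2 * \<rho>^2)"
    by (simp add: power2_eq_square algebra_simps)
  then have rhs: "16*a*b / (a+b+c)^2 = 16 * (a*\<rho>) * (b*\<rho>) / (a*\<rho> + b*\<rho> + c*\<rho>)^2"
    using \<rho>_pos by simp
  have "16 * (a*\<rho>) * (b*\<rho>) / (a*\<rho> + b*\<rho> + c*\<rho>)^2 \<le> hyp_quotient (a*\<rho>) (b*\<rho>) (c*\<rho>)"
    using hyp \<rho>_pos
    by (intro sinh_cosh_core_inequality)
       (auto simp: distrib_right[symmetric] mult_right_mono mult_nonpos_nonneg)
  then show ?thesis
    unfolding rhs exp_quotient_eq_hyp_quotient_abs \<rho>_def[symmetric] .
qed

end
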